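(* Let $C_1,C_2>0$ and let $f_k:[-1/2,1/2]\to[0,+\infty]$, $k\in\mathbb N$, be even functions, non-increasing on $[0,1/2]$. Assume: (i) for every $k$ and every pair of numbers $\varepsilon_{*,k}\le\alpha_{*,k}$ in $[0,1/2]$ such that $f_k(x_1)\ge 4$ for all $x_1\in[0,\varepsilon_{*,k})$ and $f_k(x_1)\ge 2f_k(y_1)$ for all $x_1\in[0,\varepsilon_{*,k})$, $y_1\in(\alpha_{*,k},1/2]$, it holds $$\int_0^{\varepsilon_{*,k}}\left[\int_{\alpha_{*,k}}^{1/2}\frac{f_k^{n-1}(x_1)}{|x_1-y_1|^{1+s}}\,dy_1\right]dx_1\le C_1;$$ (ii) $\int_0^{1/2}f_k^{n-1}(x_1)\,dx_1=C_2$ for every $k$. Then there exists a function $f$ such that, up to a subsequence, $f_k\to f$ almost everywhere in $[-1/2,1/2]$ as $k\to+\infty$, and $\int_0^{1/2}f^{n-1}(x_1)\,dx_1=C_2$.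
   Context: Fix an integer $n\ge 2$ and $s\in(0,1)$. *)

theory Defs
  imports "HOL-Analysis.Analysis"
begin

end

theory Submission
  imports Defs "HOL-Library.Diagonal_Subsequence"
begin

text \<open>
  By Helly's selection principle, a subsequence of the functions f_k, which are monotone on
  [0, 1/2], converges outside a countable set, and evenness transfers this to [-1/2, 1/2].
  Fatou's lemma bounds the integral of the limit g by C2. For the converse inequality no mass
  may escape into the singularity at 0. Given A, let \<epsilon> be the point where f_k drops below
  \<Lambda> = max 4 (2 f_k(A)). On [0, \<epsilon>) hypothesis (i) applies with \<alpha> = A, and since the kernel
  integral over (A, 1/2] is at least A / (2A)^(1+s), the integral of f_k^(n-1) over [0, \<epsilon>) is
  at most C1 2^(1+s) A^s; beyond \<epsilon> the integrand is below \<Lambda>^(n-1), where f_k(A)^(n-1) \<le> C2 / A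
  by monotonicity. Hence the integrals over [0, \<delta>] are uniformly small, while on (\<delta>, 1/2] the
  integrands are bounded by C2 / \<delta>, so dominated convergence applies there.
\<close>

lemma tendsto_power_ennreal:
  fixes u :: "nat \<Rightarrow> ennreal"
  assumes "u \<longlonglongrightarrow> l"
  shows "(\<lambda>j. u j ^ m) \<longlonglongrightarrow> l ^ m"
proof (induction m)
  case (Suc m)
  have "\<not> (l = 0 \<and> l ^ m = \<infinity> \<or> l = \<infinity> \<and> l ^ m = 0)"
    by (auto simp: power_eq_top_ennreal power_0_left)
  from tendsto_mult_ennreal[OF assms Suc this] show ?case by simp
qed simp

lemma countable_ennreal_gaps:
  fixes lo hi :: "'a::linorder \<Rightarrow> ennreal"
  assumes gaps: "\<And>x y. x \<in> S \<Longrightarrow> y \<in> S \<Longrightarrow> x < y \<Longrightarrow> hi y \<le> lo x"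
  shows "countable {x\<in>S. lo x < hi x}"
proof -
  define T where "T = {x\<in>S. lo x < hi x}"
  have "\<forall>x\<in>T. \<exists>q::rat. lo x < ennreal (real_of_rat q) \<and> ennreal (real_of_rat q) < hi x"
    using ennreal_rat_dense by (auto simp: T_def)
  then obtain q where q: "\<And>x. x \<in> T \<Longrightarrow> lo x < ennreal (real_of_rat (q x)) \<and> ennreal (real_of_rat (q x)) < hi x"
    by metis
  \<comment> \<open>the open intervals between lo x and hi x are pairwise disjoint\<close>
  have "inj_on q T"
  proof (rule inj_onI, rule ccontr)
    fix x y assume xy: "x \<in> T" "y \<in> T" "q x = q y" "x \<noteq> y"
    have "hi y \<le> lo x \<or> hi x \<le> lo y"
      using gaps xy by (cases "x < y") (auto simp: T_def neq_iff)
    then show False using q[OF xy(1)] q[OF xy(2)] xy(3) by (metis leD less_trans)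
  qed
  then show ?thesis unfolding T_def[symmetric]
    by (rule countable_image_inj_on[rotated]) simp
qed

lemma subseq_convergent_on_countable:
  fixes f :: "nat \<Rightarrow> 'a \<Rightarrow> 'b::{complete_linorder,linorder_topology}"
  assumes "countable D"
  shows "\<exists>r. strict_mono r \<and> (\<forall>x\<in>D. convergent (\<lambda>k. f (r k) x))"
proof (cases "D = {}")
  case False
  define p where "p = from_nat_into D"
  have D: "D = range p" unfolding p_def using assms False by simp
  interpret subseqs "\<lambda>n s. convergent (\<lambda>k. f (s k) (p n))"
  proof
    fix n and s :: "nat \<Rightarrow> nat" assume "strict_mono s"
    obtain l r where "strict_mono r" "((\<lambda>k. f (s k) (p n)) \<circ> r) \<longlonglongrightarrow> l"
      using compact_complete_linorder by blast
    then show "\<exists>r. strict_mono r \<and> convergent (\<lambda>k. f ((s \<circ> r) k) (p n))"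
      by (auto simp: convergent_def comp_def)
  qed
  have "convergent (\<lambda>k. f (diagseq k) (p n))" for n
  proof -
    have "convergent (\<lambda>k. f ((diagseq \<circ> (+) (Suc n)) k) (p n))"
      by (rule diagseq_holds) (auto dest: convergent_subseq_convergent simp: comp_def)
    then show ?thesis
      using convergent_ignore_initial_segment[of "\<lambda>k. f (diagseq k) (p n)" "Suc n"]
      by (simp add: add.commute)
  qed
  then show ?thesis using subseq_diagseq D by blast
qed (auto intro: strict_mono_id)

lemma helly_selection_antimono_on:
  fixes f :: "nat \<Rightarrow> real \<Rightarrow> ennreal"
  assumes anti: "\<And>k. antimono_on {a..b} (f k)"
  shows "\<exists>r N. strict_mono r \<and> countable N \<and>
           (\<forall>x\<in>{a..b} - N. convergent (\<lambda>j. f (r j) x))"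
proof -
  obtain r where r: "strict_mono r" and conv_rat: "\<And>q. q \<in> \<rat> \<Longrightarrow> convergent (\<lambda>j. f (r j) q)"
    using subseq_convergent_on_countable[OF countable_rat, of f] by blast
  define L where "L q = lim (\<lambda>j. f (r j) q)" for q
  have L: "(\<lambda>j. f (r j) q) \<longlonglongrightarrow> L q" if "q \<in> \<rat>" for q
    using conv_rat[OF that] unfolding L_def by (simp add: convergent_LIMSEQ_iff)
  define S where "S = {a<..<b}"
  define lo where "lo x = (SUP q\<in>{q\<in>\<rat>. x < q \<and> q \<le> b}. L q)" for x
  define hi where "hi x = (INF q\<in>{q\<in>\<rat>. a \<le> q \<and> q < x}. L q)" for x
  have gaps: "hi y \<le> lo x" if "x \<in> S" "y \<in> S" "x < y" for x y
  proof -
    obtain q where q: "q \<in> \<rat>" "x < q" "q < y" using Rats_dense_in_real[OF \<open>x < y\<close>] by blast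
    have "hi y \<le> L q" unfolding hi_def by (rule INF_lower) (use q that in \<open>auto simp: S_def\<close>)
    also have "L q \<le> lo x" unfolding lo_def by (rule SUP_upper) (use q that in \<open>auto simp: S_def\<close>)
    finally show ?thesis .
  qed
  define N where "N = {a, b} \<union> {x\<in>S. lo x < hi x}"
  have "countable N" unfolding N_def using countable_ennreal_gaps[OF gaps] by auto
  moreover have "convergent (\<lambda>j. f (r j) x)" if x: "x \<in> {a..b} - N" for x
  proof -
    have xS: "x \<in> S" and hi_lo: "hi x \<le> lo x" using x by (auto simp: N_def S_def)
    have "limsup (\<lambda>j. f (r j) x) \<le> hi x" unfolding hi_def
    proof (rule INF_greatest)
      fix q assume q: "q \<in> {q\<in>\<rat>. a \<le> q \<and> q < x}"
      have "limsup (\<lambda>j. f (r j) x) \<le> limsup (\<lambda>j. f (r j) q)"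
        using q xS anti by (intro Limsup_mono) (auto simp: S_def monotone_on_def)
      also have "\<dots> = L q" using lim_imp_Limsup[OF _ L] q by simp
      finally show "limsup (\<lambda>j. f (r j) x) \<le> L q" .
    qed
    moreover have "lo x \<le> liminf (\<lambda>j. f (r j) x)" unfolding lo_def
    proof (rule SUP_least)
      fix q assume q: "q \<in> {q\<in>\<rat>. x < q \<and> q \<le> b}"
      have "L q = liminf (\<lambda>j. f (r j) q)" using lim_imp_Liminf[OF _ L] q by simp
      also have "\<dots> \<le> liminf (\<lambda>j. f (r j) x)"
        using q xS anti by (intro Liminf_mono) (auto simp: S_def monotone_on_def)
      finally show "L q \<le> liminf (\<lambda>j. f (r j) x)" .
    qed
    ultimately have "limsup (\<lambda>j. f (r j) x) \<le> liminf (\<lambda>j. f (r j) x)"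
      using hi_lo by order
    then show ?thesis
      by (metis Liminf_le_Limsup antisym convergent_def tendsto_iff_Liminf_eq_Limsup trivial_limit_sequentially)
  qed
  ultimately show ?thesis using r by blast
qed

lemma helly_selection_even:
  fixes f :: "nat \<Rightarrow> real \<Rightarrow> ennreal"
  assumes even: "\<And>k x. x \<in> {-a..a} \<Longrightarrow> f k (-x) = f k x"
    and anti: "\<And>k. antimono_on {0..a} (f k)"
  shows "\<exists>r. strict_mono r \<and>
    (AE x in lborel. x \<in> {-a..a} \<longrightarrow> (\<lambda>j. f (r j) x) \<longlonglongrightarrow> liminf (\<lambda>j. f (r j) \<bar>x\<bar>))"
proof -
  obtain r N where r: "strict_mono r" "countable N"
    and conv: "\<And>x. x \<in> {0..a} - N \<Longrightarrow> convergent (\<lambda>j. f (r j) x)"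
    using helly_selection_antimono_on[of 0 a f, OF anti] by blast
  have "countable (N \<union> uminus ` N)" using r(2) by simp
  then have "AE x in lborel. x \<notin> N \<union> uminus ` N"
    by (intro AE_not_in countable_imp_null_set_lborel)
  then have "AE x in lborel. x \<in> {-a..a} \<longrightarrow> (\<lambda>j. f (r j) x) \<longlonglongrightarrow> liminf (\<lambda>j. f (r j) \<bar>x\<bar>)"
  proof eventually_elim
    case (elim x)
    show ?case
    proof
      assume x: "x \<in> {-a..a}"
      have "x \<notin> N" "-x \<notin> N" using elim by (auto intro: image_eqI[of _ _ "-x"])
      then have "\<bar>x\<bar> \<in> {0..a} - N" using x by (cases "0 \<le> x") auto
      then have "(\<lambda>j. f (r j) \<bar>x\<bar>) \<longlonglongrightarrow> liminf (\<lambda>j. f (r j) \<bar>x\<bar>)"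
        using conv by (metis convergent_LIMSEQ_iff lim_imp_Liminf trivial_limit_sequentially)
      moreover have "f k \<bar>x\<bar> = f k x" for k using even[OF x, of k] by (simp add: abs_if)
      ultimately show "(\<lambda>j. f (r j) x) \<longlonglongrightarrow> liminf (\<lambda>j. f (r j) \<bar>x\<bar>)" by simp
    qed
  qed
  with r show ?thesis by blast
qed

lemma ennreal_le_divide_of_mult_le:
  fixes X :: ennreal
  assumes "0 < c" "X * ennreal c \<le> ennreal D"
  shows "X \<le> ennreal (D / c)"
proof (cases X rule: ennreal_cases)
  case (real x)
  with assms have "x * c \<le> D \<or> x * c \<le> 0" by (auto simp flip: ennreal_mult simp: ennreal_le_iff2)
  then have "x \<le> D / c \<or> x = 0"
    using assms(1) \<open>0 \<le> x\<close> by (auto simp: field_simps mult_le_0_iff)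
  then show ?thesis using real by (auto intro: ennreal_leI)
next
  case top
  then show ?thesis using assms by (simp add: ennreal_mult_top top_unique)
qed

lemma borel_measurable_antimono_ennreal:
  fixes \<phi> :: "real \<Rightarrow> ennreal"
  assumes "antimono \<phi>"
  shows "\<phi> \<in> borel_measurable borel"
proof (rule borel_measurableI_greater)
  fix c
  have "is_interval {x. c < \<phi> x}"
    using assms unfolding is_interval_1 by (auto intro: less_le_trans dest: antimonoD)
  then show "{x \<in> space borel. c < \<phi> x} \<in> sets borel"
    by (simp add: real_interval_borel_measurable)
qed

lemma borel_measurable_antimono_on_indicator:
  fixes \<phi> :: "real \<Rightarrow> ennreal"
  assumes anti: "antimono_on {a..b} \<phi>" and S: "S \<subseteq> {a..b}" "S \<in> sets borel"
  shows "(\<lambda>x. \<phi> x * indicator S x) \<in> borel_measurable borel"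
proof (cases "a \<le> b")
  case True
  \<comment> \<open>clamping to the interval gives a globally antitone function that agrees with \<phi> on S\<close>
  have "antimono (\<lambda>x. \<phi> (min b (max a x)))"
  proof (rule antimonoI)
    fix x y :: real assume "x \<le> y"
    then show "\<phi> (min b (max a y)) \<le> \<phi> (min b (max a x))"
      using True by (intro monotone_onD[OF anti]) auto
  qed
  then have [measurable]: "(\<lambda>x. \<phi> (min b (max a x))) \<in> borel_measurable borel"
    by (rule borel_measurable_antimono_ennreal)
  have "(\<lambda>x. \<phi> (min b (max a x)) * indicator S x) \<in> borel_measurable borel"
    using S(2) by measurable
  moreover have "\<phi> x * indicator S x = \<phi> (min b (max a x)) * indicator S x" for x
    using S(1) by (cases "x \<in> S") (auto simp: min_def max_def)
  ultimately show ?thesis by simp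
qed (use S in auto)

lemma antimono_on_power_ennreal:
  fixes \<phi> :: "real \<Rightarrow> ennreal"
  shows "antimono_on S \<phi> \<Longrightarrow> antimono_on S (\<lambda>x. \<phi> x ^ m)"
  by (auto simp: monotone_on_def intro: power_mono_ennreal)

lemma antimono_on_le_set_nn_integral_divide:
  fixes \<phi> :: "real \<Rightarrow> ennreal"
  assumes anti: "antimono_on {a..b} \<phi>" and int: "(\<integral>\<^sup>+x\<in>{a..b}. \<phi> x \<partial>lborel) \<le> ennreal C"
    and c: "a < c" "c \<le> b"
  shows "\<phi> c \<le> ennreal (C / (c - a))"
proof (rule ennreal_le_divide_of_mult_le)
  have "\<phi> c * ennreal (c - a) = (\<integral>\<^sup>+x. \<phi> c * indicator {a..c} x \<partial>lborel)"
    using c by (simp add: nn_integral_cmult_indicator)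
  also have "\<dots> \<le> (\<integral>\<^sup>+x\<in>{a..b}. \<phi> x \<partial>lborel)"
    using c by (intro nn_integral_mono) (auto split: split_indicator intro: monotone_onD[OF anti])
  finally show "\<phi> c * ennreal (c - a) \<le> ennreal C" using int by simp
qed (use c in simp)

lemma set_nn_integral_tendsto_antimono_on:
  fixes h :: "nat \<Rightarrow> real \<Rightarrow> ennreal" and H :: "real \<Rightarrow> ennreal"
  assumes anti_h: "\<And>j. antimono_on {a..b} (h j)" and anti_H: "antimono_on {a..b} H"
    and int: "\<And>j. (\<integral>\<^sup>+x\<in>{a..b}. h j x \<partial>lborel) \<le> ennreal C"
    and lim: "AE x in lborel. x \<in> {a..b} \<longrightarrow> (\<lambda>j. h j x) \<longlonglongrightarrow> H x"
    and \<delta>: "a < \<delta>" "\<delta> \<le> b"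
  shows "(\<lambda>j. \<integral>\<^sup>+x\<in>{\<delta><..b}. h j x \<partial>lborel) \<longlonglongrightarrow> (\<integral>\<^sup>+x\<in>{\<delta><..b}. H x \<partial>lborel)"
proof (rule nn_integral_dominated_convergence[where w="\<lambda>x. ennreal (C / (\<delta> - a)) * indicator {\<delta><..b} x"])
  \<comment> \<open>by monotonicity, h j \<delta> is at most the mean value of h j over [a, \<delta>]\<close>
  have "h j x \<le> ennreal (C / (\<delta> - a))" if "x \<in> {\<delta><..b}" for j x
  proof -
    have "h j x \<le> h j \<delta>" using that \<delta> by (intro monotone_onD[OF anti_h]) auto
    also have "\<dots> \<le> ennreal (C / (\<delta> - a))"
      using \<delta> int by (intro antimono_on_le_set_nn_integral_divide[OF anti_h]) auto
    finally show ?thesis .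
  qed
  then show "AE x in lborel. h j x * indicator {\<delta><..b} x \<le> ennreal (C / (\<delta> - a)) * indicator {\<delta><..b} x" for j
    by (auto split: split_indicator)
  show "(\<integral>\<^sup>+x. ennreal (C / (\<delta> - a)) * indicator {\<delta><..b} x \<partial>lborel) < \<infinity>"
    using \<delta> by (simp add: nn_integral_cmult_indicator ennreal_mult_less_top)
  show "AE x in lborel. (\<lambda>j. h j x * indicator {\<delta><..b} x) \<longlonglongrightarrow> H x * indicator {\<delta><..b} x"
    using lim by eventually_elim (use \<delta> in \<open>auto split: split_indicator\<close>)
qed (use \<delta> in \<open>auto intro!: borel_measurable_antimono_on_indicator anti_h anti_H\<close>)

lemma set_nn_integral_AE_limit_antimono_on:
  fixes h :: "nat \<Rightarrow> real \<Rightarrow> ennreal" and H :: "real \<Rightarrow> ennreal"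
  assumes anti_h: "\<And>j. antimono_on {a..b} (h j)" and anti_H: "antimono_on {a..b} H"
    and int: "\<And>j. (\<integral>\<^sup>+x\<in>{a..b}. h j x \<partial>lborel) = ennreal C"
    and lim: "AE x in lborel. x \<in> {a..b} \<longrightarrow> (\<lambda>j. h j x) \<longlonglongrightarrow> H x"
    and head: "\<And>e. 0 < e \<Longrightarrow> \<exists>\<delta>\<in>{a<..b}. \<forall>j. (\<integral>\<^sup>+x\<in>{a..\<delta>}. h j x \<partial>lborel) \<le> ennreal e"
  shows "(\<integral>\<^sup>+x\<in>{a..b}. H x \<partial>lborel) = ennreal C"
proof (rule antisym)
  have "(\<integral>\<^sup>+x\<in>{a..b}. H x \<partial>lborel) = (\<integral>\<^sup>+x. liminf (\<lambda>j. h j x * indicator {a..b} x) \<partial>lborel)"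
    using lim by (intro nn_integral_cong_AE)
      (auto elim!: eventually_mono simp: lim_imp_Liminf split: split_indicator)
  also have "\<dots> \<le> liminf (\<lambda>j. \<integral>\<^sup>+x\<in>{a..b}. h j x \<partial>lborel)"
    by (intro nn_integral_liminf) (auto intro!: borel_measurable_antimono_on_indicator anti_h)
  finally show "(\<integral>\<^sup>+x\<in>{a..b}. H x \<partial>lborel) \<le> ennreal C" by (simp add: int Liminf_const)
next
  show "ennreal C \<le> (\<integral>\<^sup>+x\<in>{a..b}. H x \<partial>lborel)"
  proof (rule ennreal_le_epsilon)
    fix e :: real assume "0 < e"
    then obtain \<delta> where \<delta>: "\<delta> \<in> {a<..b}" and small: "\<And>j. (\<integral>\<^sup>+x\<in>{a..\<delta>}. h j x \<partial>lborel) \<le> ennreal e"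
      using head by blast
    have "ennreal C \<le> ennreal e + (\<integral>\<^sup>+x\<in>{\<delta><..b}. h j x \<partial>lborel)" for j
    proof -
      have "ennreal C \<le> (\<integral>\<^sup>+x. h j x * indicator {a..\<delta>} x + h j x * indicator {\<delta><..b} x \<partial>lborel)"
        unfolding int[of j, symmetric] by (intro nn_integral_mono) (auto split: split_indicator)
      also have "\<dots> = (\<integral>\<^sup>+x\<in>{a..\<delta>}. h j x \<partial>lborel) + (\<integral>\<^sup>+x\<in>{\<delta><..b}. h j x \<partial>lborel)"
        using \<delta> by (intro nn_integral_add) (auto intro!: borel_measurable_antimono_on_indicator anti_h)
      finally show ?thesis using small[of j] by (auto intro: order.trans add_right_mono)
    qed
    moreover have "(\<lambda>j. \<integral>\<^sup>+x\<in>{\<delta><..b}. h j x \<partial>lborel) \<longlonglongrightarrow> (\<integral>\<^sup>+x\<in>{\<delta><..b}. H x \<partial>lborel)"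
      using \<delta> int by (intro set_nn_integral_tendsto_antimono_on[OF anti_h anti_H _ lim]) auto
    ultimately have "ennreal C \<le> ennreal e + (\<integral>\<^sup>+x\<in>{\<delta><..b}. H x \<partial>lborel)"
      by (intro LIMSEQ_le_const[OF tendsto_add[OF tendsto_const]]) auto
    also have "(\<integral>\<^sup>+x\<in>{\<delta><..b}. H x \<partial>lborel) \<le> (\<integral>\<^sup>+x\<in>{a..b}. H x \<partial>lborel)"
      using \<delta> by (intro nn_integral_mono) (auto split: split_indicator)
    finally show "ennreal C \<le> (\<integral>\<^sup>+x\<in>{a..b}. H x \<partial>lborel) + ennreal e"
      by (simp add: add.commute add_left_mono)
  qed
qed

lemma set_nn_integral_kernel_ge:
  fixes A s x :: real
  assumes A: "0 < A" "A \<le> 1/4" and s: "0 \<le> s" and x: "0 \<le> x" "x \<le> A"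
  shows "ennreal (A / (2*A) powr (1+s)) \<le> (\<integral>\<^sup>+y\<in>{A<..1/2}. ennreal (1 / \<bar>x - y\<bar> powr (1+s)) \<partial>lborel)"
proof -
  have "ennreal (A / (2*A) powr (1+s)) = (\<integral>\<^sup>+y. ennreal (1 / (2*A) powr (1+s)) * indicator {A<..2*A} y \<partial>lborel)"
    using A by (simp add: nn_integral_cmult_indicator flip: ennreal_mult)
  also have "\<dots> \<le> (\<integral>\<^sup>+y\<in>{A<..1/2}. ennreal (1 / \<bar>x - y\<bar> powr (1+s)) \<partial>lborel)"
  proof (intro nn_integral_mono)
    fix y
    show "ennreal (1 / (2*A) powr (1+s)) * indicator {A<..2*A} y
          \<le> ennreal (1 / \<bar>x - y\<bar> powr (1+s)) * indicator {A<..1/2} y"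
    proof (cases "y \<in> {A<..2*A}")
      case True
      then have "0 < \<bar>x - y\<bar>" "\<bar>x - y\<bar> \<le> 2*A" using x by auto
      then have "1 / (2*A) powr (1+s) \<le> 1 / \<bar>x - y\<bar> powr (1+s)"
        using s by (intro divide_left_mono powr_mono2 mult_pos_pos) auto
      then show ?thesis using True A by (auto intro: ennreal_leI)
    qed simp
  qed
  finally show ?thesis .
qed

lemma antimono_on_threshold:
  fixes \<phi> :: "real \<Rightarrow> 'b::linorder"
  assumes anti: "antimono_on {a..b} \<phi>" and "a \<le> b"
  shows "\<exists>\<epsilon>\<in>{a..b}. (\<forall>x\<in>{a..<\<epsilon>}. \<Lambda> \<le> \<phi> x) \<and> (\<forall>x\<in>{\<epsilon><..b}. \<phi> x < \<Lambda>)"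
proof -
  define E where "E = insert a {x\<in>{a..b}. \<Lambda> \<le> \<phi> x}"
  have bdd: "bdd_above E" unfolding E_def by (rule bdd_aboveI[of _ b]) (use \<open>a \<le> b\<close> in auto)
  define \<epsilon> where "\<epsilon> = Sup E"
  have "\<epsilon> \<in> {a..b}"
    unfolding \<epsilon>_def using bdd \<open>a \<le> b\<close> by (auto intro: cSup_upper cSup_least simp: E_def)
  moreover have "\<Lambda> \<le> \<phi> x" if x: "x \<in> {a..<\<epsilon>}" for x
  proof -
    obtain z where z: "z \<in> E" "x < z" using x less_cSup_iff[OF _ bdd] by (auto simp: \<epsilon>_def E_def)
    then have "\<Lambda> \<le> \<phi> z" "z \<le> b" using x by (auto simp: E_def)
    moreover have "\<phi> z \<le> \<phi> x" using x z \<open>z \<le> b\<close> by (intro monotone_onD[OF anti]) auto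
    ultimately show ?thesis by order
  qed
  moreover have "\<phi> x < \<Lambda>" if "x \<in> {\<epsilon><..b}" for x
    using that cSup_upper[OF _ bdd, of x] \<open>\<epsilon> \<in> {a..b}\<close> by (force simp: \<epsilon>_def E_def)
  ultimately show ?thesis by blast
qed

lemma max_power_le_add_ennreal:
  fixes u v :: ennreal
  shows "max u v ^ m \<le> u ^ m + v ^ m"
  by (cases "u \<le> v") (auto simp: max_def intro: add_increasing add_increasing2)

lemma set_nn_integral_head_le:
  fixes \<phi> :: "real \<Rightarrow> ennreal"
  assumes anti: "antimono_on {0..1/2} \<phi>" and s: "0 \<le> s"
    and A: "0 < A" "A \<le> 1/4" and \<epsilon>: "0 \<le> \<epsilon>" "\<epsilon> \<le> A"
    and kernel_int: "(\<integral>\<^sup>+x\<in>{0..<\<epsilon>}. (\<integral>\<^sup>+y\<in>{A<..1/2}.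
        \<phi> x * ennreal (1 / \<bar>x - y\<bar> powr (1+s)) \<partial>lborel) \<partial>lborel) \<le> ennreal C1"
  shows "(\<integral>\<^sup>+x\<in>{0..<\<epsilon>}. \<phi> x \<partial>lborel) \<le> ennreal (C1 * (2*A) powr (1+s) / A)"
proof -
  define K where "K = A / (2*A) powr (1+s)"
  have K: "0 < K" unfolding K_def using A by simp
  have [measurable]: "(\<lambda>x. \<phi> x * indicator {0..<\<epsilon>} x) \<in> borel_measurable borel"
    using \<epsilon> A by (intro borel_measurable_antimono_on_indicator[OF anti]) auto
  have "(\<integral>\<^sup>+x\<in>{0..<\<epsilon>}. \<phi> x \<partial>lborel) * ennreal K = (\<integral>\<^sup>+x\<in>{0..<\<epsilon>}. \<phi> x * ennreal K \<partial>lborel)"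
    by (subst nn_integral_multc[symmetric]) (auto simp: mult_ac)
  also have "\<dots> \<le> (\<integral>\<^sup>+x\<in>{0..<\<epsilon>}. (\<integral>\<^sup>+y\<in>{A<..1/2}.
        \<phi> x * ennreal (1 / \<bar>x - y\<bar> powr (1+s)) \<partial>lborel) \<partial>lborel)"
  proof (intro nn_integral_mono)
    fix x
    show "\<phi> x * ennreal K * indicator {0..<\<epsilon>} x \<le> (\<integral>\<^sup>+y\<in>{A<..1/2}.
        \<phi> x * ennreal (1 / \<bar>x - y\<bar> powr (1+s)) \<partial>lborel) * indicator {0..<\<epsilon>} x"
    proof (cases "x \<in> {0..<\<epsilon>}")
      case True
      have "\<phi> x * ennreal K \<le> \<phi> x * (\<integral>\<^sup>+y\<in>{A<..1/2}. ennreal (1 / \<bar>x - y\<bar> powr (1+s)) \<partial>lborel)"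
        unfolding K_def using True \<epsilon> by (intro mult_left_mono set_nn_integral_kernel_ge A s) auto
      also have "\<dots> = (\<integral>\<^sup>+y\<in>{A<..1/2}. \<phi> x * ennreal (1 / \<bar>x - y\<bar> powr (1+s)) \<partial>lborel)"
        by (subst nn_integral_cmult[symmetric]) (auto simp: mult_ac)
      finally show ?thesis using True by simp
    qed simp
  qed
  also have "\<dots> \<le> ennreal C1" by (fact kernel_int)
  finally have "(\<integral>\<^sup>+x\<in>{0..<\<epsilon>}. \<phi> x \<partial>lborel) \<le> ennreal (C1 / K)"
    by (rule ennreal_le_divide_of_mult_le[OF K])
  also have "C1 / K = C1 * (2*A) powr (1+s) / A" unfolding K_def by simp
  finally show ?thesis .
qed

lemma set_nn_integral_le_split:
  fixes \<phi> :: "real \<Rightarrow> ennreal"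
  assumes anti: "antimono_on {a..b} \<phi>" and "a \<le> \<epsilon>" "\<epsilon> \<le> b" "a \<le> \<delta>"
    and below: "\<And>x. x \<in> {\<epsilon><..\<delta>} \<Longrightarrow> \<phi> x \<le> L"
  shows "(\<integral>\<^sup>+x\<in>{a..\<delta>}. \<phi> x \<partial>lborel) \<le> (\<integral>\<^sup>+x\<in>{a..<\<epsilon>}. \<phi> x \<partial>lborel) + L * ennreal (\<delta> - a)"
proof -
  have "(\<integral>\<^sup>+x\<in>{a..\<delta>}. \<phi> x \<partial>lborel)
      \<le> (\<integral>\<^sup>+x. \<phi> x * indicator {a..<\<epsilon>} x + L * indicator {a..\<delta>} x \<partial>lborel)"
    using AE_lborel_singleton[of \<epsilon>]
    by (intro nn_integral_mono_AE) (auto split: split_indicator intro!: below)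
  also have "\<dots> = (\<integral>\<^sup>+x\<in>{a..<\<epsilon>}. \<phi> x \<partial>lborel) + L * ennreal (\<delta> - a)"
    using assms by (subst nn_integral_add)
      (auto simp: nn_integral_cmult_indicator intro!: borel_measurable_antimono_on_indicator)
  finally show ?thesis .
qed

lemma set_nn_integral_near_zero_le:
  fixes \<phi> :: "real \<Rightarrow> ennreal" and m :: nat and s C1 C2 A \<delta> :: real
  assumes anti: "antimono_on {0..1/2} \<phi>" and s: "0 \<le> s" and C: "0 \<le> C1" "0 \<le> C2"
    and hyp_i: "\<And>\<epsilon> \<alpha>. 0 \<le> \<epsilon> \<Longrightarrow> \<epsilon> \<le> \<alpha> \<Longrightarrow> \<alpha> \<le> 1/2 \<Longrightarrow>
        (\<forall>x\<in>{0..<\<epsilon>}. (4::ennreal) \<le> \<phi> x) \<Longrightarrow>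
        (\<forall>x\<in>{0..<\<epsilon>}. \<forall>y\<in>{\<alpha><..1/2}. 2 * \<phi> y \<le> \<phi> x) \<Longrightarrow>
        (\<integral>\<^sup>+x\<in>{0..<\<epsilon>}. (\<integral>\<^sup>+y\<in>{\<alpha><..1/2}.
            \<phi> x ^ m * ennreal (1 / \<bar>x - y\<bar> powr (1 + s)) \<partial>lborel) \<partial>lborel)
          \<le> ennreal C1"
    and hyp_ii: "(\<integral>\<^sup>+x\<in>{0..1/2}. \<phi> x ^ m \<partial>lborel) \<le> ennreal C2"
    and \<delta>: "0 < \<delta>" "\<delta> \<le> A" "A \<le> 1/4"
  shows "(\<integral>\<^sup>+x\<in>{0..\<delta>}. \<phi> x ^ m \<partial>lborel)
           \<le> ennreal (C1 * (2*A) powr (1+s) / A + \<delta> * (4^m + 2^m * (C2 / A)))"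
proof -
  \<comment> \<open>where \<phi> \<ge> \<Lambda>, both side conditions of hypothesis (i) hold with \<alpha> = A\<close>
  define \<Lambda> where "\<Lambda> = max 4 (2 * \<phi> A)"
  define B where "B = 4^m + 2^m * (C2 / A)"
  have anti_m: "antimono_on {0..1/2} (\<lambda>x. \<phi> x ^ m)" by (rule antimono_on_power_ennreal[OF anti])
  obtain \<epsilon> where \<epsilon>: "\<epsilon> \<in> {0..A}" and above: "\<And>x. x \<in> {0..<\<epsilon>} \<Longrightarrow> \<Lambda> \<le> \<phi> x"
    and below: "\<And>x. x \<in> {\<epsilon><..A} \<Longrightarrow> \<phi> x < \<Lambda>"
    using antimono_on_threshold[OF monotone_on_subset[OF anti], of 0 A \<Lambda>] \<delta> by auto
  have "(\<integral>\<^sup>+x\<in>{0..<\<epsilon>}. \<phi> x ^ m \<partial>lborel) \<le> ennreal (C1 * (2*A) powr (1+s) / A)"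
  proof (rule set_nn_integral_head_le[OF anti_m s _ _ _ _ hyp_i])
    show "\<forall>x\<in>{0..<\<epsilon>}. (4::ennreal) \<le> \<phi> x"
      using above unfolding \<Lambda>_def by (auto intro: order.trans)
    show "\<forall>x\<in>{0..<\<epsilon>}. \<forall>y\<in>{A<..1/2}. 2 * \<phi> y \<le> \<phi> x"
    proof (intro ballI)
      fix x y assume x: "x \<in> {0..<\<epsilon>}" and y: "y \<in> {A<..1/2}"
      have "2 * \<phi> y \<le> 2 * \<phi> A" using y \<delta> by (intro mult_left_mono monotone_onD[OF anti]) auto
      also have "\<dots> \<le> \<phi> x" using above[OF x] unfolding \<Lambda>_def by simp
      finally show "2 * \<phi> y \<le> \<phi> x" .
    qed
  qed (use \<epsilon> \<delta> in auto)
  moreover have "\<phi> x ^ m \<le> ennreal B" if "x \<in> {\<epsilon><..\<delta>}" for x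
  proof -
    have "\<phi> A ^ m \<le> ennreal (C2 / (A - 0))"
      using \<delta> by (intro antimono_on_le_set_nn_integral_divide[OF anti_m hyp_ii]) auto
    then have "\<Lambda> ^ m \<le> 4 ^ m + 2 ^ m * ennreal (C2 / A)"
      using max_power_le_add_ennreal[of 4 "2 * \<phi> A" m]
      by (auto simp: \<Lambda>_def power_mult_distrib elim!: order.trans intro!: add_left_mono mult_left_mono)
    also have "\<dots> = ennreal B"
      unfolding B_def using C \<delta> by (simp add: ennreal_mult' flip: ennreal_power del: times_divide_eq_right)
    finally have "\<Lambda> ^ m \<le> ennreal B" .
    moreover have "\<phi> x ^ m \<le> \<Lambda> ^ m"
      using below[of x] that \<delta> by (intro power_mono_ennreal less_imp_le) auto
    ultimately show ?thesis by order
  qed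
  then have "(\<integral>\<^sup>+x\<in>{0..\<delta>}. \<phi> x ^ m \<partial>lborel)
      \<le> (\<integral>\<^sup>+x\<in>{0..<\<epsilon>}. \<phi> x ^ m \<partial>lborel) + ennreal B * ennreal \<delta>"
    using set_nn_integral_le_split[OF anti_m, of \<epsilon> \<delta> "ennreal B"] \<epsilon> \<delta> by simp
  ultimately show ?thesis
    unfolding B_def using C \<delta>
    by (auto simp: ennreal_mult mult.commute elim!: order.trans intro!: add_mono)
qed

lemma exists_small_head_bound:
  fixes s C1 C2 e :: real and m :: nat
  assumes s: "0 < s" and C: "0 \<le> C1" "0 \<le> C2" and e: "0 < e"
  shows "\<exists>A \<delta>. 0 < \<delta> \<and> \<delta> \<le> A \<and> A \<le> 1/4 \<and>
           C1 * (2*A) powr (1+s) / A + \<delta> * (4^m + 2^m * (C2 / A)) \<le> e"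
proof -
  define c where "c = 2 powr (1+s) * (C1 + 1)"
  define A where "A = min (1/4) ((e / (2*c)) powr (1/s))"
  have c: "0 < c" unfolding c_def using C by simp
  have A: "0 < A" "A \<le> 1/4" unfolding A_def using e c by auto
  have "A powr s \<le> ((e / (2*c)) powr (1/s)) powr s"
    unfolding A_def using A s by (intro powr_mono2) auto
  also have "\<dots> = e / (2*c)" using s e c by (simp add: powr_powr)
  finally have As: "A powr s \<le> e / (2*c)" .
  have "C1 * (2*A) powr (1+s) / A = C1 * 2 powr (1+s) * A powr s"
    using A by (simp add: powr_mult powr_add field_simps)
  also have "\<dots> \<le> c * A powr s"
    unfolding c_def using A by (intro mult_right_mono) (auto simp: algebra_simps)
  also have "\<dots> \<le> e / 2" using As c by (simp add: field_simps)
  finally have first: "C1 * (2*A) powr (1+s) / A \<le> e / 2" .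
  define B where "B = 4^m + 2^m * (C2 / A)"
  have B: "1 \<le> B" unfolding B_def using C A by (simp add: add_increasing2)
  define \<delta> where "\<delta> = min A (e / (2*B))"
  have \<delta>: "0 < \<delta>" "\<delta> \<le> A" unfolding \<delta>_def using A e B by auto
  have "\<delta> * B \<le> e / (2*B) * B" unfolding \<delta>_def using B by (intro mult_right_mono) auto
  then have "\<delta> * B \<le> e / 2" using B by simp
  with first have "C1 * (2*A) powr (1+s) / A + \<delta> * B \<le> e" by linarith
  with \<delta> A show ?thesis unfolding B_def by blast
qed

lemma set_nn_integral_near_zero_uniformly_small:
  fixes f :: "nat \<Rightarrow> real \<Rightarrow> ennreal" and m :: nat and s C1 C2 e :: real
  assumes anti: "\<And>k. antimono_on {0..1/2} (f k)" and s: "0 < s" and C: "0 \<le> C1" "0 \<le> C2"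
    and e: "0 < e"
    and hyp_i: "\<And>k \<epsilon> \<alpha>. 0 \<le> \<epsilon> \<Longrightarrow> \<epsilon> \<le> \<alpha> \<Longrightarrow> \<alpha> \<le> 1/2 \<Longrightarrow>
        (\<forall>x\<in>{0..<\<epsilon>}. (4::ennreal) \<le> f k x) \<Longrightarrow>
        (\<forall>x\<in>{0..<\<epsilon>}. \<forall>y\<in>{\<alpha><..1/2}. 2 * f k y \<le> f k x) \<Longrightarrow>
        (\<integral>\<^sup>+x\<in>{0..<\<epsilon>}. (\<integral>\<^sup>+y\<in>{\<alpha><..1/2}.
            f k x ^ m * ennreal (1 / \<bar>x - y\<bar> powr (1 + s)) \<partial>lborel) \<partial>lborel)
          \<le> ennreal C1"
    and hyp_ii: "\<And>k. (\<integral>\<^sup>+x\<in>{0..1/2}. f k x ^ m \<partial>lborel) \<le> ennreal C2"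
  shows "\<exists>\<delta>\<in>{0<..1/2}. \<forall>k. (\<integral>\<^sup>+x\<in>{0..\<delta>}. f k x ^ m \<partial>lborel) \<le> ennreal e"
proof -
  obtain A \<delta> where \<delta>: "0 < \<delta>" "\<delta> \<le> A" "A \<le> 1/4"
    and e: "C1 * (2*A) powr (1+s) / A + \<delta> * (4^m + 2^m * (C2 / A)) \<le> e"
    using exists_small_head_bound[OF s C e] by blast
  have "(\<integral>\<^sup>+x\<in>{0..\<delta>}. f k x ^ m \<partial>lborel)
      \<le> ennreal (C1 * (2*A) powr (1+s) / A + \<delta> * (4^m + 2^m * (C2 / A)))" for k
    using s C by (intro set_nn_integral_near_zero_le[OF anti _ _ _ hyp_i hyp_ii \<delta>]) auto
  also have "\<dots> \<le> ennreal e" using e by (rule ennreal_leI)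
  finally show ?thesis using \<delta> by (intro bexI[of _ \<delta>] allI) auto
qed

theorem proposition5p1:
  fixes n :: nat and s C1 C2 :: real and f :: "nat \<Rightarrow> real \<Rightarrow> ennreal"
  assumes n: "n \<ge> 2" and s: "0 < s" "s < 1"
    and C: "C1 > 0" "C2 > 0"
    and even: "\<And>k x. x \<in> {-1/2..1/2} \<Longrightarrow> f k (-x) = f k x"
    and noninc: "\<And>k x y. 0 \<le> x \<Longrightarrow> x \<le> y \<Longrightarrow> y \<le> 1/2 \<Longrightarrow> f k y \<le> f k x"
    and hyp_i: "\<And>k \<epsilon> \<alpha>. 0 \<le> \<epsilon> \<Longrightarrow> \<epsilon> \<le> \<alpha> \<Longrightarrow> \<alpha> \<le> 1/2 \<Longrightarrow>
        (\<forall>x\<in>{0..<\<epsilon>}. (4::ennreal) \<le> f k x) \<Longrightarrow>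
        (\<forall>x\<in>{0..<\<epsilon>}. \<forall>y\<in>{\<alpha><..1/2}. 2 * f k y \<le> f k x) \<Longrightarrow>
        (\<integral>\<^sup>+x\<in>{0..<\<epsilon>}. (\<integral>\<^sup>+y\<in>{\<alpha><..1/2}.
            f k x ^ (n - 1) * ennreal (1 / \<bar>x - y\<bar> powr (1 + s)) \<partial>lborel) \<partial>lborel)
          \<le> ennreal C1"
    and hyp_ii: "\<And>k. (\<integral>\<^sup>+x\<in>{0..1/2}. f k x ^ (n - 1) \<partial>lborel) = ennreal C2"
  shows "\<exists>g :: real \<Rightarrow> ennreal. \<exists>r :: nat \<Rightarrow> nat. strict_mono r \<and>
     (AE x in lborel. x \<in> {-1/2..1/2} \<longrightarrow> (\<lambda>j. f (r j) x) \<longlonglongrightarrow> g x) \<and>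
     (\<integral>\<^sup>+x\<in>{0..1/2}. g x ^ (n - 1) \<partial>lborel) = ennreal C2"
proof -
  have anti: "antimono_on {0..1/2} (f k)" for k
    using noninc by (auto intro: monotone_onI)
  have "\<exists>r. strict_mono r \<and> (AE x in lborel. x \<in> {-(1/2)..1/2} \<longrightarrow>
      (\<lambda>j. f (r j) x) \<longlonglongrightarrow> liminf (\<lambda>j. f (r j) \<bar>x\<bar>))"
    by (rule helly_selection_even[OF _ anti]) (use even in simp)
  then obtain r where r: "strict_mono r" and conv: "AE x in lborel. x \<in> {-(1/2)..1/2} \<longrightarrow>
      (\<lambda>j. f (r j) x) \<longlonglongrightarrow> liminf (\<lambda>j. f (r j) \<bar>x\<bar>)"
    by blast
  define g where "g x = liminf (\<lambda>j. f (r j) \<bar>x\<bar>)" for x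
  have anti_g: "antimono_on {0..1/2} g"
    unfolding g_def by (intro monotone_onI Liminf_mono always_eventually allI) (auto intro!: noninc)
  have "(\<integral>\<^sup>+x\<in>{0..1/2}. g x ^ (n - 1) \<partial>lborel) = ennreal C2"
  proof (rule set_nn_integral_AE_limit_antimono_on)
    show "AE x in lborel. x \<in> {0..1/2} \<longrightarrow> (\<lambda>j. f (r j) x ^ (n - 1)) \<longlonglongrightarrow> g x ^ (n - 1)"
      using conv by eventually_elim (auto intro: tendsto_power_ennreal simp: g_def)
    show "\<exists>\<delta>\<in>{0<..1/2}. \<forall>j. (\<integral>\<^sup>+x\<in>{0..\<delta>}. f (r j) x ^ (n - 1) \<partial>lborel) \<le> ennreal e"
      if "0 < e" for e
      using set_nn_integral_near_zero_uniformly_small[OF anti s(1) _ _ that hyp_i hyp_ii[THEN eq_refl]] C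
      by fastforce
  qed (use hyp_ii antimono_on_power_ennreal[OF anti] antimono_on_power_ennreal[OF anti_g] in auto)
  moreover have "AE x in lborel. x \<in> {-1/2..1/2} \<longrightarrow> (\<lambda>j. f (r j) x) \<longlonglongrightarrow> g x"
    using conv unfolding g_def by simp
  ultimately show ?thesis using r by blast
qed

end
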